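(* Let $R$ be an associative ring with a derivation $'$. Suppose $u_n,v_n\in R$ ($n\in\mathbb{Z}$) satisfy $$u_n'=v_{n+1}u_n-u_nv_n,\qquad v_n'=u_nv_n-v_nu_{n-1}\qquad(n\in\mathbb{Z}).$$ Then $a_n:=u_n+v_n$ and $b_n:=v_nu_{n-1}$ satisfy $$a_n'=b_{n+1}-b_n,\qquad b_n'=a_nb_n-b_na_{n-1}\qquad(n\in\mathbb{Z}).$$
   Context: The system for $(u_n,v_n)$ is the non-abelian Volterra lattice $\gamma_n'=\gamma_{n+1}\gamma_n-\gamma_n\gamma_{n-1}$ written with $u_k=\gamma_{2k+1}$, $v_k=\gamma_{2k}$; the system for $(a_n,b_n)$ is equivalent to the non-abelian 1d Toda lattice when $a_n=\theta_n'\theta_n^{-1}$, $b_n=\theta_n\theta_{n-1}^{-1}$. *)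

theory Defs
  imports Main
begin

definition is_derivation :: "('a::ring \<Rightarrow> 'a) \<Rightarrow> bool" where
  "is_derivation D \<longleftrightarrow>
     (\<forall>x y. D (x + y) = D x + D y) \<and> (\<forall>x y. D (x * y) = D x * y + x * D y)"

end

theory Submission
  imports Defs
begin

text \<open>In \<open>D a\<^sub>n\<close> the
terms \<open>u\<^sub>n v\<^sub>n\<close> of the two Volterra equations cancel and what remains telescopes;
\<open>D b\<^sub>n\<close> is the Leibniz rule followed by a rearrangement in which no commutativity is used.\<close>

definition volterra_lattice :: "('a::ring \<Rightarrow> 'a) \<Rightarrow> (int \<Rightarrow> 'a) \<Rightarrow> (int \<Rightarrow> 'a) \<Rightarrow> bool" where
  "volterra_lattice D u v \<longleftrightarrow>
     (\<forall>n. D (u n) = v (n + 1) * u n - u n * v n \<and> D (v n) = u n * v n - v n * u (n - 1))"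

definition toda_lattice :: "('a::ring \<Rightarrow> 'a) \<Rightarrow> (int \<Rightarrow> 'a) \<Rightarrow> (int \<Rightarrow> 'a) \<Rightarrow> bool" where
  "toda_lattice D a b \<longleftrightarrow>
     (\<forall>n. D (a n) = b (n + 1) - b n \<and> D (b n) = a n * b n - b n * a (n - 1))"

lemma derivation_add: "is_derivation D \<Longrightarrow> D (x + y) = D x + D y"
  by (simp add: is_derivation_def)

lemma derivation_mult: "is_derivation D \<Longrightarrow> D (x * y) = D x * y + x * D y"
  by (simp add: is_derivation_def)

lemma volterra_imp_toda:
  assumes D: "is_derivation D" and "volterra_lattice D u v"
  shows "toda_lattice D (\<lambda>n. u n + v n) (\<lambda>n. v n * u (n - 1))"
  unfolding toda_lattice_def
proof (intro allI conjI)
  fix n :: int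
  have du: "\<And>m. D (u m) = v (m + 1) * u m - u m * v m"
    and dv: "\<And>m. D (v m) = u m * v m - v m * u (m - 1)"
    using assms(2) by (simp_all add: volterra_lattice_def)
  show "D (u n + v n) = v (n + 1) * u (n + 1 - 1) - v n * u (n - 1)"
    by (simp add: derivation_add [OF D] du dv)
  have "D (v n * u (n - 1))
      = (u n * v n - v n * u (n - 1)) * u (n - 1) + v n * (v n * u (n - 1) - u (n - 1) * v (n - 1))"
    using du [of "n - 1"] by (simp add: derivation_mult [OF D] dv)
  also have "\<dots> = (u n + v n) * (v n * u (n - 1)) - v n * u (n - 1) * (u (n - 1) + v (n - 1))"
    by (simp add: algebra_simps)
  finally show "D (v n * u (n - 1))
      = (u n + v n) * (v n * u (n - 1)) - v n * u (n - 1) * (u (n - 1) + v (n - 1))" .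
qed

theorem proposition5p3:
  fixes D :: "'a::ring \<Rightarrow> 'a" and u v a b :: "int \<Rightarrow> 'a"
  assumes "is_derivation D"
    and "\<And>n. D (u n) = v (n + 1) * u n - u n * v n"
    and "\<And>n. D (v n) = u n * v n - v n * u (n - 1)"
    and "\<And>n. a n = u n + v n"
    and "\<And>n. b n = v n * u (n - 1)"
  shows "\<forall>n. D (a n) = b (n + 1) - b n \<and> D (b n) = a n * b n - b n * a (n - 1)"
proof -
  have "volterra_lattice D u v"
    using assms(2,3) by (simp add: volterra_lattice_def)
  then have "toda_lattice D (\<lambda>n. u n + v n) (\<lambda>n. v n * u (n - 1))"
    by (rule volterra_imp_toda [OF assms(1)])
  moreover have "a = (\<lambda>n. u n + v n)" and "b = (\<lambda>n. v n * u (n - 1))"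
    using assms(4,5) by auto
  ultimately show ?thesis
    by (simp add: toda_lattice_def)
qed

end
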